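(* Let $G=(V,E)$ be a graph and let $f_0,f_t\colon V\to\{1,2\}$ be token-placements with $f_0\simeq f_t$. Let $G_B$ be the complete bipartite graph with parts $X=\{x_v : v\in V,\ f_0(v)=1\}$ and $Y=\{y_v: v\in V,\ f_t(v)=1\}$, where the edge $(x_u,y_v)$ has weight $w(x_u,y_v)=\mathrm{dist}_G(u,v)$, the length of a shortest $u$–$v$ path in $G$ ($\infty$ if none). Then $\mathrm{OPT}(f_0,f_t)=\min_M \sum_{e\in M}w(e)$, where the minimum is over all perfect matchings $M$ of $G_B$.
   Context: Graphs are finite, simple and undirected. A token-placement of $G=(V,E)$ with colors $C=\{1,\dots,c\}$ is a surjective map $f\colon V\to C$. Two distinct token-placements $f,f'$ are adjacent if there is an edge $uv\in E$ with $f'(u)=f(v)$, $f'(v)=f(u)$ and $f'(w)=f(w)$ for all other $w$. A swapping sequence between $f$ and $f'$ is a sequence $f_1=f,\dots,f_h=f'$ of token-placements with consecutive members adjacent; its length is $h-1$. $\mathrm{OPT}(f,f')$ is the minimum length of such a sequence ($\infty$ if none). $f\simeq f'$ means that for every connected component $K$ of $G$ and every color $i$, the numbers of vertices of $K$ with $f$-color $i$ and with $f'$-color $i$ coincide. *)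

theory Defs
  imports Main "HOL-Library.Extended_Nat"
begin

definition simple_graph :: "('a::finite \<Rightarrow> 'a \<Rightarrow> bool) \<Rightarrow> bool" where
  "simple_graph E \<longleftrightarrow> symp E \<and> irreflp E"

definition token_placement :: "nat \<Rightarrow> ('a::finite \<Rightarrow> nat) \<Rightarrow> bool" where
  "token_placement c f \<longleftrightarrow> range f = {1..c}"

definition tp_adjacent :: "('a \<Rightarrow> 'a \<Rightarrow> bool) \<Rightarrow> ('a \<Rightarrow> nat) \<Rightarrow> ('a \<Rightarrow> nat) \<Rightarrow> bool" where
  "tp_adjacent E f f' \<longleftrightarrow> f \<noteq> f' \<and>
     (\<exists>u v. E u v \<and> f' u = f v \<and> f' v = f u \<and> (\<forall>w. w \<noteq> u \<and> w \<noteq> v \<longrightarrow> f' w = f w))"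

definition swapping_sequence :: "nat \<Rightarrow> ('a::finite \<Rightarrow> 'a \<Rightarrow> bool) \<Rightarrow> ('a \<Rightarrow> nat) \<Rightarrow> ('a \<Rightarrow> nat)
    \<Rightarrow> ('a \<Rightarrow> nat) list \<Rightarrow> bool" where
  "swapping_sequence c E f f' fs \<longleftrightarrow> fs \<noteq> [] \<and> hd fs = f \<and> last fs = f' \<and>
     (\<forall>g \<in> set fs. token_placement c g) \<and>
     (\<forall>i. Suc i < length fs \<longrightarrow> tp_adjacent E (fs ! i) (fs ! Suc i))"

definition OPT :: "nat \<Rightarrow> ('a::finite \<Rightarrow> 'a \<Rightarrow> bool) \<Rightarrow> ('a \<Rightarrow> nat) \<Rightarrow> ('a \<Rightarrow> nat) \<Rightarrow> enat" where
  "OPT c E f f' = (INF fs \<in> {fs. swapping_sequence c E f f' fs}. enat (length fs - 1))"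

definition walk :: "('a \<Rightarrow> 'a \<Rightarrow> bool) \<Rightarrow> 'a \<Rightarrow> 'a \<Rightarrow> 'a list \<Rightarrow> bool" where
  "walk E u v p \<longleftrightarrow> p \<noteq> [] \<and> hd p = u \<and> last p = v \<and>
     (\<forall>i. Suc i < length p \<longrightarrow> E (p ! i) (p ! Suc i))"

definition graph_dist :: "('a \<Rightarrow> 'a \<Rightarrow> bool) \<Rightarrow> 'a \<Rightarrow> 'a \<Rightarrow> enat" where
  "graph_dist E u v = (INF p \<in> {p. walk E u v p}. enat (length p - 1))"

definition components :: "('a \<Rightarrow> 'a \<Rightarrow> bool) \<Rightarrow> 'a set set" where
  "components E = {{u. E\<^sup>*\<^sup>* v u} | v. True}"

definition tp_equiv :: "('a::finite \<Rightarrow> 'a \<Rightarrow> bool) \<Rightarrow> ('a \<Rightarrow> nat) \<Rightarrow> ('a \<Rightarrow> nat) \<Rightarrow> bool" where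
  "tp_equiv E f f' \<longleftrightarrow> (\<forall>K \<in> components E. \<forall>i.
      card {v \<in> K. f v = i} = card {v \<in> K. f' v = i})"

text \<open>Perfect matchings of the complete bipartite graph with parts X and Y
(an edge (x_u, y_v) is represented by the pair (u, v)).\<close>
definition perfect_matchings :: "'a set \<Rightarrow> 'a set \<Rightarrow> ('a \<times> 'a) set set" where
  "perfect_matchings X Y = {M. M \<subseteq> X \<times> Y \<and>
      (\<forall>x \<in> X. \<exists>!y. (x, y) \<in> M) \<and> (\<forall>y \<in> Y. \<exists>!x. (x, y) \<in> M)}"

end

theory Submission
  imports Defs
begin

text \<open>A swap moves at most one colour-1 token, by one edge, so it changes the cost of a
cheapest matching of the colour-1 tokens to their targets by at most one; this gives
the lower bound. Conversely, given a matching of cost \<open>n > 0\<close>, pick a pair \<open>(u, v)\<close>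
whose target \<open>v\<close> is not yet occupied by colour 1 and let \<open>x\<close> be the first vertex after
\<open>u\<close> on a shortest \<open>u\<close>-\<open>v\<close> path. If \<open>x\<close> carries colour 2, swapping \<open>u\<close> and \<open>x\<close>
lowers the cost by one. Otherwise \<open>x\<close> is matched to some \<open>w\<close>, and exchanging the partners
of \<open>u\<close> and \<open>x\<close> does not increase the cost (as \<open>dist u w \<le> 1 + dist x w\<close>), while the
new pair \<open>(x, v)\<close> is one step shorter; induct on the distance.\<close>

lemma enat_INF_attained:
  fixes g :: "'b \<Rightarrow> enat"
  assumes "(INF x\<in>A. g x) \<noteq> \<infinity>"
  obtains x where "x \<in> A" "(INF x\<in>A. g x) = g x"
proof -
  obtain y where "y \<in> g ` A" using assms by (auto simp: top_enat_def[symmetric])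
  then have "Inf (g ` A) \<in> g ` A" by (rule wellorder_InfI)
  then show ?thesis using that by blast
qed

lemma graph_dist_le_walk: "walk E u v p \<Longrightarrow> graph_dist E u v \<le> enat (length p - 1)"
  unfolding graph_dist_def by (rule INF_lower) simp

lemma graph_dist_attained:
  assumes "graph_dist E u v \<noteq> \<infinity>"
  obtains p where "walk E u v p" "graph_dist E u v = enat (length p - 1)"
  using assms unfolding graph_dist_def by (elim enat_INF_attained) auto

lemma graph_dist_self [simp]: "graph_dist E u u = 0"
proof -
  have "walk E u u [u]" unfolding walk_def by simp
  then show ?thesis using graph_dist_le_walk[of E u u "[u]"] by (simp add: zero_enat_def[symmetric])
qed

lemma graph_dist_eq_0D:
  assumes "graph_dist E u v = 0"
  shows "u = v"
proof -
  have "graph_dist E u v \<noteq> \<infinity>" using assms by simp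
  then obtain p where p: "walk E u v p" "graph_dist E u v = enat (length p - 1)"
    by (rule graph_dist_attained)
  then have "length p = 1" using assms by (cases p) (auto simp: walk_def zero_enat_def)
  then show ?thesis using p(1) unfolding walk_def by (cases p) auto
qed

lemma walk_Cons: "E u x \<Longrightarrow> walk E x v q \<Longrightarrow> walk E u v (u # q)"
  unfolding walk_def by (auto simp: nth_Cons hd_conv_nth split: nat.split)

lemma walk_ConsD: "walk E u v (u # x # q) \<Longrightarrow> E u x \<and> walk E x v (x # q)"
  unfolding walk_def by (auto dest: spec[of _ 0] spec[of _ "Suc _"])

lemma graph_dist_edge_le: "E u x \<Longrightarrow> graph_dist E u y \<le> 1 + graph_dist E x y"
proof (cases "graph_dist E x y")
  case (enat k)
  assume "E u x"
  obtain q where q: "walk E x y q" "graph_dist E x y = enat (length q - 1)"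
    using graph_dist_attained[of E x y] enat by auto
  then have "q \<noteq> []" by (simp add: walk_def)
  have "graph_dist E u y \<le> enat (length (u # q) - 1)"
    using walk_Cons[OF \<open>E u x\<close> q(1)] by (rule graph_dist_le_walk)
  also have "\<dots> = 1 + graph_dist E x y"
    using q(2) \<open>q \<noteq> []\<close> by (cases q) (auto simp: one_enat_def)
  finally show ?thesis .
qed simp

lemma graph_dist_SucE:
  assumes "graph_dist E u v = enat (Suc k)"
  obtains x where "E u x" "graph_dist E x v = enat k"
proof -
  obtain p where p: "walk E u v p" "graph_dist E u v = enat (length p - 1)"
    using graph_dist_attained[of E u v] assms by auto
  moreover have "p \<noteq> []" "hd p = u" using p(1) by (simp_all add: walk_def)
  ultimately obtain x q where "p = u # x # q" "length q = k"
    using assms by (cases p; cases "tl p") auto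
  with p(1) have x: "E u x" "walk E x v (x # q)" by (auto dest: walk_ConsD)
  have "graph_dist E x v \<le> enat k"
    using graph_dist_le_walk[OF x(2)] \<open>length q = k\<close> by simp
  moreover have "enat (Suc k) \<le> 1 + graph_dist E x v"
    using graph_dist_edge_le[of E u x v, OF x(1)] assms by simp
  ultimately have "graph_dist E x v = enat k"
    by (cases "graph_dist E x v") (auto simp: one_enat_def)
  with x(1) show ?thesis by (rule that)
qed

lemma perfect_matchingsI:
  assumes "M \<subseteq> X \<times> Y"
    and "\<And>x. x \<in> X \<Longrightarrow> \<exists>y. (x, y) \<in> M" and "\<And>y. y \<in> Y \<Longrightarrow> \<exists>x. (x, y) \<in> M"
    and "\<And>x y y'. (x, y) \<in> M \<Longrightarrow> (x, y') \<in> M \<Longrightarrow> y = y'"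
    and "\<And>x x' y. (x, y) \<in> M \<Longrightarrow> (x', y) \<in> M \<Longrightarrow> x = x'"
  shows "M \<in> perfect_matchings X Y"
  unfolding perfect_matchings_def using assms by blast

lemma
  assumes "M \<in> perfect_matchings X Y"
  shows perfect_matchings_subset: "M \<subseteq> X \<times> Y"
    and perfect_matchings_left_ex: "x \<in> X \<Longrightarrow> \<exists>y. (x, y) \<in> M"
    and perfect_matchings_right_ex: "y \<in> Y \<Longrightarrow> \<exists>x. (x, y) \<in> M"
    and perfect_matchings_left_unique: "(x, y) \<in> M \<Longrightarrow> (x, y') \<in> M \<Longrightarrow> y = y'"
    and perfect_matchings_right_unique: "(x, y) \<in> M \<Longrightarrow> (x', y) \<in> M \<Longrightarrow> x = x'"
  using assms unfolding perfect_matchings_def by blast+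

lemma perfect_matchings_card_eq:
  assumes M: "M \<in> perfect_matchings X Y"
  shows "card X = card Y"
proof -
  have "inj_on fst M" "inj_on snd M"
    using perfect_matchings_left_unique[OF M] perfect_matchings_right_unique[OF M]
    by (auto intro!: inj_onI)
  moreover have "fst ` M = X"
  proof
    show "fst ` M \<subseteq> X" using perfect_matchings_subset[OF M] by auto
    show "X \<subseteq> fst ` M" using perfect_matchings_left_ex[OF M] by force
  qed
  moreover have "snd ` M = Y"
  proof
    show "snd ` M \<subseteq> Y" using perfect_matchings_subset[OF M] by auto
    show "Y \<subseteq> snd ` M" using perfect_matchings_right_ex[OF M] by force
  qed
  ultimately show ?thesis by (metis card_image)
qed

lemma perfect_matchings_ex_right_notin_left:
  assumes M: "M \<in> perfect_matchings X Y" and "finite X" "X \<noteq> Y"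
  obtains x y where "(x, y) \<in> M" "y \<notin> X"
proof -
  have "\<not> Y \<subseteq> X"
    using perfect_matchings_card_eq[OF M] card_subset_eq[OF \<open>finite X\<close>] \<open>X \<noteq> Y\<close> by metis
  then obtain y where "y \<in> Y" "y \<notin> X" by blast
  with perfect_matchings_right_ex[OF M] that show ?thesis by blast
qed

lemma Id_on_perfect_matchings: "Id_on X \<in> perfect_matchings X X"
  by (rule perfect_matchingsI) auto

lemma perfect_matchings_replace_left:
  assumes M: "M \<in> perfect_matchings X Y" and ay: "(a, y) \<in> M" and "a' \<notin> X"
  shows "insert (a', y) (M - {(a, y)}) \<in> perfect_matchings (insert a' (X - {a})) Y"
    (is "?N \<in> _")
proof (rule perfect_matchingsI)
  note sub = perfect_matchings_subset[OF M]
    and uniq = perfect_matchings_left_unique[OF M] perfect_matchings_right_unique[OF M]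
  show "?N \<subseteq> insert a' (X - {a}) \<times> Y" using sub uniq(1)[OF ay] ay by blast
  show "\<exists>z. (x, z) \<in> ?N" if "x \<in> insert a' (X - {a})" for x
    using that perfect_matchings_left_ex[OF M, of x] by auto
  show "\<exists>x. (x, z) \<in> ?N" if "z \<in> Y" for z
    using perfect_matchings_right_ex[OF M that] by auto
  show "z = z'" if "(x, z) \<in> ?N" "(x, z') \<in> ?N" for x z z'
    using that sub uniq(1)[of x z z'] \<open>a' \<notin> X\<close> by blast
  show "x = x'" if "(x, z) \<in> ?N" "(x', z) \<in> ?N" for x x' z
    using that uniq(2)[of x z x'] uniq(2)[OF ay] by blast
qed

lemma perfect_matchings_exchange:
  assumes M: "M \<in> perfect_matchings X Y" and ab: "(a, b) \<in> M" and cd: "(c, d) \<in> M"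
    and "a \<noteq> c"
  shows "insert (a, d) (insert (c, b) (M - {(a, b), (c, d)})) \<in> perfect_matchings X Y"
    (is "?N \<in> _")
proof (rule perfect_matchingsI)
  note sub = perfect_matchings_subset[OF M]
    and uniq = perfect_matchings_left_unique[OF M] perfect_matchings_right_unique[OF M]
  have "b \<noteq> d" using uniq(2)[OF ab] cd \<open>a \<noteq> c\<close> by blast
  show "?N \<subseteq> X \<times> Y" using sub ab cd by auto
  show "\<exists>y. (x, y) \<in> ?N" if "x \<in> X" for x
    using perfect_matchings_left_ex[OF M that] by auto
  show "\<exists>x. (x, y) \<in> ?N" if "y \<in> Y" for y
    using perfect_matchings_right_ex[OF M that] by auto
  show "y = y'" if "(x, y) \<in> ?N" "(x, y') \<in> ?N" for x y y'
    using that uniq(1)[of x y y'] uniq(1)[OF ab] uniq(1)[OF cd] \<open>a \<noteq> c\<close> by blast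
  show "x = x'" if "(x, y) \<in> ?N" "(x', y) \<in> ?N" for x x' y
    using that uniq(2)[of x y x'] uniq(2)[OF ab] uniq(2)[OF cd] \<open>b \<noteq> d\<close> by blast
qed

definition matching_cost :: "('a \<Rightarrow> 'a \<Rightarrow> bool) \<Rightarrow> ('a \<times> 'a) set \<Rightarrow> enat" where
  "matching_cost E M = (\<Sum>(u, v) \<in> M. graph_dist E u v)"

lemma matching_cost_Id_on [simp]: "matching_cost E (Id_on X) = 0"
  unfolding matching_cost_def by (rule sum.neutral) auto

lemma matching_cost_remove:
  fixes M :: "('a::finite \<times> 'a) set"
  shows "(a, b) \<in> M \<Longrightarrow> matching_cost E M = graph_dist E a b + matching_cost E (M - {(a, b)})"
  unfolding matching_cost_def by (simp add: sum.remove)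

lemma matching_cost_insert:
  fixes M :: "('a::finite \<times> 'a) set"
  shows "(a, b) \<notin> M \<Longrightarrow> matching_cost E (insert (a, b) M) = graph_dist E a b + matching_cost E M"
  unfolding matching_cost_def by simp

lemma matching_cost_replace_le:
  fixes M :: "('a::finite \<times> 'a) set"
  assumes "(a, y) \<in> M" "(a', y) \<notin> M" "graph_dist E a' y + d \<le> graph_dist E a y + e"
  shows "matching_cost E (insert (a', y) (M - {(a, y)})) + d \<le> matching_cost E M + e"
proof -
  let ?R = "matching_cost E (M - {(a, y)})"
  have "matching_cost E (insert (a', y) (M - {(a, y)})) + d = (graph_dist E a' y + d) + ?R"
    using assms(2) by (simp add: matching_cost_insert ac_simps)
  also have "\<dots> \<le> (graph_dist E a y + e) + ?R" using assms(3) by (rule add_right_mono)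
  also have "\<dots> = matching_cost E M + e" using matching_cost_remove[OF assms(1)] by (simp add: ac_simps)
  finally show ?thesis .
qed

lemma matching_cost_exchange_le:
  fixes M :: "('a::finite \<times> 'a) set"
  assumes M: "M \<in> perfect_matchings X Y" and "(a, b) \<in> M" "(c, d) \<in> M" "a \<noteq> c"
    and "graph_dist E a d + graph_dist E c b \<le> graph_dist E a b + graph_dist E c d"
  shows "matching_cost E (insert (a, d) (insert (c, b) (M - {(a, b), (c, d)}))) \<le> matching_cost E M"
proof -
  let ?R = "M - {(a, b), (c, d)}"
  have "b \<noteq> d" using perfect_matchings_right_unique[OF M] assms(2-4) by blast
  then have new: "(c, b) \<notin> ?R" "(a, d) \<notin> insert (c, b) ?R"
    using perfect_matchings_left_unique[OF M] perfect_matchings_right_unique[OF M] assms(2-4)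
    by blast+
  have old: "(c, d) \<in> M - {(a, b)}" "M - {(a, b)} - {(c, d)} = ?R" using assms(3,4) by auto
  have "matching_cost E (insert (a, d) (insert (c, b) ?R))
      = (graph_dist E a d + graph_dist E c b) + matching_cost E ?R"
    using new by (simp add: matching_cost_insert ac_simps)
  also have "\<dots> \<le> (graph_dist E a b + graph_dist E c d) + matching_cost E ?R"
    using assms(5) by (rule add_right_mono)
  also have "\<dots> = matching_cost E M"
    using matching_cost_remove[OF assms(2)] matching_cost_remove[OF old(1)] old(2)
    by (simp add: ac_simps)
  finally show ?thesis .
qed

lemma token_placement_2_cases:
  assumes "token_placement 2 f"
  shows "f x = 1 \<or> f x = 2"
proof -
  have "f x \<in> {1..2}" using assms unfolding token_placement_def by blast
  then show ?thesis by auto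
qed

lemma token_placement_2_eqI:
  assumes "token_placement 2 f" "token_placement 2 g" "{x. f x = 1} = {x. g x = 1}"
  shows "f = g"
proof
  fix x
  have "f x = 1 \<longleftrightarrow> g x = 1" using assms(3) by blast
  then show "f x = g x"
    using token_placement_2_cases[OF assms(1), of x] token_placement_2_cases[OF assms(2), of x]
    by auto
qed

lemma token_placement_swap:
  assumes "token_placement c f"
  shows "token_placement c (f(u := f x, x := f u))"
proof -
  have "range (f(u := f x, x := f u)) = range f" by auto
  with assms show ?thesis unfolding token_placement_def by simp
qed

lemma tp_adjacent_swap: "E u x \<Longrightarrow> f u \<noteq> f x \<Longrightarrow> tp_adjacent E f (f(u := f x, x := f u))"
  unfolding tp_adjacent_def by (rule conjI, metis fun_upd_same, auto)

lemma matching_cost_move_left: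
  fixes M :: "('a::finite \<times> 'a) set"
  assumes "E a b" and M: "M \<in> perfect_matchings X Y" and "b \<in> X" "a \<notin> X"
  shows "\<exists>M' \<in> perfect_matchings (insert a (X - {b})) Y. matching_cost E M' \<le> matching_cost E M + 1"
proof -
  obtain y where y: "(b, y) \<in> M" using perfect_matchings_left_ex[OF M \<open>b \<in> X\<close>] by blast
  have "(a, y) \<notin> M" using perfect_matchings_subset[OF M] \<open>a \<notin> X\<close> by blast
  then have "matching_cost E (insert (a, y) (M - {(b, y)})) + 0 \<le> matching_cost E M + 1"
    using y graph_dist_edge_le[of E a b y, OF \<open>E a b\<close>]
    by (intro matching_cost_replace_le) (auto simp: ac_simps)
  then show ?thesis using perfect_matchings_replace_left[OF M y \<open>a \<notin> X\<close>] by auto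
qed

text \<open>No restriction on the colours is needed: if not exactly one of the swapped tokens has
colour 1, the colour-1 set does not change at all.\<close>

lemma matching_cost_tp_adjacent:
  fixes f g :: "'a::finite \<Rightarrow> nat"
  assumes "symp E" "tp_adjacent E f g" and M: "M \<in> perfect_matchings {x. g x = 1} Y"
  shows "\<exists>M' \<in> perfect_matchings {x. f x = 1} Y. matching_cost E M' \<le> matching_cost E M + 1"
proof -
  obtain u v where uv: "E u v" "g u = f v" "g v = f u"
      "\<And>w. w \<noteq> u \<Longrightarrow> w \<noteq> v \<Longrightarrow> g w = f w"
    using assms(2) unfolding tp_adjacent_def by blast
  then have "E v u" using \<open>symp E\<close> by (blast dest: sympD)
  consider "f u = 1" "f v \<noteq> 1" | "f v = 1" "f u \<noteq> 1" | "f u = 1 \<longleftrightarrow> f v = 1" by blast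
  then show ?thesis
  proof cases
    case 1
    then have "{x. f x = 1} = insert u ({x. g x = 1} - {v})" using uv 1 by (auto; metis)
    moreover have "v \<in> {x. g x = 1}" "u \<notin> {x. g x = 1}" using uv 1 by auto
    ultimately show ?thesis using matching_cost_move_left[of E u v, OF \<open>E u v\<close> M] by simp
  next
    case 2
    then have "{x. f x = 1} = insert v ({x. g x = 1} - {u})" using uv 2 by (auto; metis)
    moreover have "u \<in> {x. g x = 1}" "v \<notin> {x. g x = 1}" using uv 2 by auto
    ultimately show ?thesis using matching_cost_move_left[of E v u, OF \<open>E v u\<close> M] by simp
  next
    case 3
    then have "{x. f x = 1} = {x. g x = 1}" using uv by (auto; metis)
    then show ?thesis using M by (intro bexI[of _ M]) (auto simp: le_iff_add)
  qed
qed

lemma swap_toward_target: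
  fixes f :: "'a::finite \<Rightarrow> nat"
  assumes "token_placement 2 f" and M: "M \<in> perfect_matchings {y. f y = 1} Y"
    and uv: "(u, v) \<in> M" and "E u x" "f x \<noteq> 1" "graph_dist E x v + 1 \<le> graph_dist E u v"
  shows "\<exists>f' M'. tp_adjacent E f f' \<and> token_placement 2 f' \<and>
           M' \<in> perfect_matchings {y. f' y = 1} Y \<and> matching_cost E M' + 1 \<le> matching_cost E M"
proof -
  define f' where "f' = f(u := f x, x := f u)"
  have "f u = 1" using perfect_matchings_subset[OF M] uv by blast
  then have "u \<noteq> x" using \<open>f x \<noteq> 1\<close> by blast
  have "{y. f' y = 1} = insert x ({y. f y = 1} - {u})"
    using \<open>f u = 1\<close> \<open>f x \<noteq> 1\<close> \<open>u \<noteq> x\<close> unfolding f'_def by auto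
  then have "insert (x, v) (M - {(u, v)}) \<in> perfect_matchings {y. f' y = 1} Y"
    using perfect_matchings_replace_left[OF M uv] \<open>f x \<noteq> 1\<close> by simp
  moreover have "(x, v) \<notin> M" using perfect_matchings_subset[OF M] \<open>f x \<noteq> 1\<close> by blast
  then have "matching_cost E (insert (x, v) (M - {(u, v)})) + 1 \<le> matching_cost E M + 0"
    using uv assms(6) by (intro matching_cost_replace_le) simp_all
  moreover have "tp_adjacent E f f'" unfolding f'_def
    using \<open>E u x\<close> \<open>f u = 1\<close> \<open>f x \<noteq> 1\<close> by (intro tp_adjacent_swap) simp_all
  moreover have "token_placement 2 f'" unfolding f'_def using assms(1) by (rule token_placement_swap)
  ultimately show ?thesis by auto
qed

lemma exchange_toward_target:
  fixes M :: "('a::finite \<times> 'a) set"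
  assumes M: "M \<in> perfect_matchings X Y" and uv: "(u, v) \<in> M" and xw: "(x, w) \<in> M"
    and "E u x" "u \<noteq> x" "graph_dist E u v = 1 + graph_dist E x v"
  shows "\<exists>M' \<in> perfect_matchings X Y. (x, v) \<in> M' \<and> matching_cost E M' \<le> matching_cost E M"
proof -
  let ?M' = "insert (u, w) (insert (x, v) (M - {(u, v), (x, w)}))"
  have "graph_dist E u w + graph_dist E x v \<le> (1 + graph_dist E x w) + graph_dist E x v"
    using graph_dist_edge_le[of E u x w, OF \<open>E u x\<close>] by (rule add_right_mono)
  also have "\<dots> = (1 + graph_dist E x v) + graph_dist E x w" by (simp add: ac_simps)
  also have "\<dots> = graph_dist E u v + graph_dist E x w" by (simp only: assms(6))
  finally have "matching_cost E ?M' \<le> matching_cost E M"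
    by (rule matching_cost_exchange_le[OF M uv xw \<open>u \<noteq> x\<close>])
  moreover have "?M' \<in> perfect_matchings X Y"
    using M uv xw \<open>u \<noteq> x\<close> by (rule perfect_matchings_exchange)
  ultimately show ?thesis by (intro bexI[of _ ?M'] conjI) simp_all
qed

lemma exists_swap_decreasing_matching_cost:
  fixes f :: "'a::finite \<Rightarrow> nat"
  assumes "token_placement 2 f" "M \<in> perfect_matchings {y. f y = 1} Y"
    and "(u, v) \<in> M" "f v \<noteq> 1" "graph_dist E u v = enat k"
  shows "\<exists>f' M'. tp_adjacent E f f' \<and> token_placement 2 f' \<and>
           M' \<in> perfect_matchings {y. f' y = 1} Y \<and> matching_cost E M' + 1 \<le> matching_cost E M"
  using assms(2-5)
proof (induction k arbitrary: u M)
  case 0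
  then have "u = v" by (simp add: zero_enat_def[symmetric] graph_dist_eq_0D)
  with 0 show ?case using perfect_matchings_subset by blast
next
  case (Suc k)
  note M = Suc.prems(1) and uv = Suc.prems(2)
  obtain x where x: "E u x" "graph_dist E x v = enat k"
    using Suc.prems(4) by (elim graph_dist_SucE)
  have dist: "graph_dist E u v = 1 + graph_dist E x v"
    using Suc.prems(4) x(2) by (simp add: one_enat_def)
  show ?case
  proof (cases "f x = 1")
    case False
    then show ?thesis
      using swap_toward_target[where E = E, OF assms(1) M uv x(1)] dist by (simp add: ac_simps)
  next
    case True
    obtain w where "(x, w) \<in> M" using perfect_matchings_left_ex[OF M] True by blast
    moreover have "u \<noteq> x" using x(2) Suc.prems(4) by auto
    ultimately obtain M' where M': "M' \<in> perfect_matchings {y. f y = 1} Y" "(x, v) \<in> M'"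
        "matching_cost E M' \<le> matching_cost E M"
      using exchange_toward_target[OF M uv _ x(1) _ dist] by blast
    then show ?thesis using Suc.IH[OF M'(1,2) Suc.prems(3) x(2)] order_trans by blast
  qed
qed

lemma swapping_sequence_Cons:
  "swapping_sequence c E g f' fs \<Longrightarrow> tp_adjacent E f g \<Longrightarrow> token_placement c f \<Longrightarrow>
    swapping_sequence c E f f' (f # fs)"
  unfolding swapping_sequence_def by (auto simp: nth_Cons hd_conv_nth split: nat.split)

lemma swapping_sequence_ConsD:
  assumes "swapping_sequence c E f f' (g # fs)" "fs \<noteq> []"
  shows "tp_adjacent E f (hd fs) \<and> swapping_sequence c E (hd fs) f' fs"
  using assms unfolding swapping_sequence_def
  by (cases fs) (auto dest: spec[of _ 0] spec[of _ "Suc _"])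

lemma OPT_le_swapping_sequence: "swapping_sequence c E f f' fs \<Longrightarrow> OPT c E f f' \<le> enat (length fs - 1)"
  unfolding OPT_def by (rule INF_lower) simp

lemma OPT_tp_adjacent_le:
  assumes "tp_adjacent E f g" "token_placement c f"
  shows "OPT c E f f' \<le> OPT c E g f' + 1"
proof (cases "OPT c E g f' = \<infinity>")
  case False
  then obtain fs where fs: "swapping_sequence c E g f' fs" "OPT c E g f' = enat (length fs - 1)"
    unfolding OPT_def by (elim enat_INF_attained) auto
  have "OPT c E f f' \<le> enat (length (f # fs) - 1)"
    using swapping_sequence_Cons[OF fs(1) assms] by (rule OPT_le_swapping_sequence)
  also have "\<dots> = OPT c E g f' + 1"
    using fs unfolding swapping_sequence_def by (cases fs) (auto simp: one_enat_def)
  finally show ?thesis .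
qed simp

lemma OPT_le_matching_cost:
  fixes f ft :: "'a::finite \<Rightarrow> nat"
  assumes "token_placement 2 f" "token_placement 2 ft"
    and "M \<in> perfect_matchings {x. f x = 1} {x. ft x = 1}"
  shows "OPT 2 E f ft \<le> matching_cost E M"
proof (cases "matching_cost E M")
  case (enat n)
  with assms(1,3) show ?thesis
  proof (induction n arbitrary: f M rule: less_induct)
    case (less n)
    note f = less.prems(1) and M = less.prems(2) and cost = less.prems(3)
    show ?case
    proof (cases "{x. f x = 1} = {x. ft x = 1}")
      case True
      then have "swapping_sequence 2 E f ft [f]"
        using token_placement_2_eqI[OF f assms(2)] f by (simp add: swapping_sequence_def)
      then have "OPT 2 E f ft \<le> 0" by (auto dest: OPT_le_swapping_sequence simp: zero_enat_def)
      then show ?thesis by simp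
    next
      case False
      then obtain u v where uv: "(u, v) \<in> M" "f v \<noteq> 1"
        using perfect_matchings_ex_right_notin_left[OF M finite] by blast
      have "graph_dist E u v + matching_cost E (M - {(u, v)}) = enat n"
        using matching_cost_remove[OF uv(1), of E] cost by simp
      then obtain k where k: "graph_dist E u v = enat k" by (cases "graph_dist E u v") auto
      obtain f' M' where f': "tp_adjacent E f f'" "token_placement 2 f'"
          "M' \<in> perfect_matchings {x. f' x = 1} {x. ft x = 1}" "matching_cost E M' + 1 \<le> enat n"
        using exists_swap_decreasing_matching_cost[OF f M uv k] cost by auto
      then obtain m where m: "matching_cost E M' = enat m" "m < n"
        by (cases "matching_cost E M'") (auto simp: one_enat_def)
      have "OPT 2 E f ft \<le> OPT 2 E f' ft + 1" using f'(1) f by (rule OPT_tp_adjacent_le)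
      also have "\<dots> \<le> enat m + 1" using less.IH[OF m(2) f'(2,3) m(1)] m(1) by (simp add: add_right_mono)
      also have "\<dots> \<le> enat n" using m(2) by (simp add: one_enat_def)
      finally show ?thesis using cost by simp
    qed
  qed
qed simp

lemma matching_cost_le_swapping_sequence:
  fixes f f' :: "'a::finite \<Rightarrow> nat"
  assumes "symp E" "swapping_sequence c E f f' fs"
  shows "\<exists>M \<in> perfect_matchings {x. f x = 1} {x. f' x = 1}. matching_cost E M \<le> enat (length fs - 1)"
  using assms(2)
proof (induction fs arbitrary: f)
  case Nil
  then show ?case by (simp add: swapping_sequence_def)
next
  case (Cons g fs)
  show ?case
  proof (cases "fs = []")
    case True
    then have "f = f'" using Cons.prems unfolding swapping_sequence_def by auto
    then show ?thesis by (intro bexI[of _ "Id_on {x. f x = 1}"]) (auto intro: Id_on_perfect_matchings)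
  next
    case False
    then obtain M' where M': "M' \<in> perfect_matchings {x. hd fs x = 1} {x. f' x = 1}"
        "matching_cost E M' \<le> enat (length fs - 1)"
      using Cons swapping_sequence_ConsD by blast
    then obtain M where M: "M \<in> perfect_matchings {x. f x = 1} {x. f' x = 1}"
        "matching_cost E M \<le> matching_cost E M' + 1"
      using matching_cost_tp_adjacent[OF assms(1) _ M'(1)] swapping_sequence_ConsD[OF Cons.prems False]
      by blast
    have "matching_cost E M' + 1 \<le> enat (length fs - 1) + 1" using M'(2) by (rule add_right_mono)
    also have "\<dots> = enat (length (g # fs) - 1)" using False by (cases fs) (simp_all add: one_enat_def)
    finally show ?thesis using M by (blast intro: order_trans)
  qed
qed

lemma INF_matching_cost_le_OPT:
  fixes f f' :: "'a::finite \<Rightarrow> nat"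
  assumes "symp E"
  shows "(INF M \<in> perfect_matchings {x. f x = 1} {x. f' x = 1}. matching_cost E M) \<le> OPT c E f f'"
  unfolding OPT_def
proof (rule INF_greatest)
  fix fs assume "fs \<in> {fs. swapping_sequence c E f f' fs}"
  then obtain M where "M \<in> perfect_matchings {x. f x = 1} {x. f' x = 1}"
      "matching_cost E M \<le> enat (length fs - 1)"
    using matching_cost_le_swapping_sequence[OF assms] by blast
  then show "(INF M \<in> perfect_matchings {x. f x = 1} {x. f' x = 1}. matching_cost E M)
      \<le> enat (length fs - 1)"
    by (blast intro: INF_lower2)
qed

theorem mainTheorem6:
  fixes E :: "'a::finite \<Rightarrow> 'a \<Rightarrow> bool" and f0 ft :: "'a \<Rightarrow> nat"
  assumes "simple_graph E"
    and "token_placement 2 f0" and "token_placement 2 ft"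
    and "tp_equiv E f0 ft"
  shows "OPT 2 E f0 ft =
    (INF M \<in> perfect_matchings {v. f0 v = 1} {v. ft v = 1}. \<Sum>(u, v) \<in> M. graph_dist E u v)"
proof -
  have "symp E" using assms(1) unfolding simple_graph_def by blast
  have "OPT 2 E f0 ft \<le> (INF M \<in> perfect_matchings {v. f0 v = 1} {v. ft v = 1}. matching_cost E M)"
    using OPT_le_matching_cost[OF assms(2,3)] by (rule INF_greatest)
  moreover have "(INF M \<in> perfect_matchings {v. f0 v = 1} {v. ft v = 1}. matching_cost E M)
      \<le> OPT 2 E f0 ft"
    using \<open>symp E\<close> by (rule INF_matching_cost_le_OPT)
  ultimately show ?thesis unfolding matching_cost_def by (rule antisym)
qed

end
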